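(* Let $\alpha\in\mathbb N$. Define the polynomials $$p_n^{(\alpha)}(x)=\binom{\alpha+n-1}{n}_{\mathbb F}\,p_n(x\phi;q^{\alpha-1},1;q),\quad n\ge 0.$$ Then $$p_n^{(\alpha)}(x)=\sum_{k=0}^n(-1)^{kn-\binom{k}{2}}\binom{n}{k}_{\mathbb F}\binom{\alpha+n+k-1}{n}_{\mathbb F}x^k,$$ and $$\int p_n^{(\alpha)}(x)p_m^{(\alpha)}(x)\,d\mu_\alpha(x)=\delta_{n,m}(-1)^{\alpha n}\frac{F_\alpha}{F_{\alpha+2n}},$$ so that the polynomials $$P_n^{(\alpha)}(x)=\sqrt{(-1)^{\alpha n}F_{\alpha+2n}/F_\alpha}\;p_n^{(\alpha)}(x)$$ satisfy $\int P_n^{(\alpha)}P_m^{(\alpha)}\,d\mu_\alpha=\delta_{n,m}$, i.e. they are the corresponding orthonormal polynomials.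
   Context: $F_n$ are the Fibonacci numbers ($F_0=0,F_1=1,F_{n+1}=F_n+F_{n-1}$). $\phi=(1+\sqrt5)/2$, $q=(1-\sqrt5)/(1+\sqrt5)$. The Fibonomial coefficients are $\binom{n}{k}_{\mathbb F}=\prod_{i=1}^k F_{n-i+1}/F_i$ for $0\le k\le n$ (empty product $=1$). With $(a;q)_k=\prod_{j=0}^{k-1}(1-aq^j)$, the little $q$-Jacobi polynomials are $$p_n(x;a,b;q)=\sum_{k=0}^n\frac{(q^{-n};q)_k(abq^{n+1};q)_k}{(q;q)_k(aq;q)_k}(xq)^k.$$ $\mu_\alpha=(1-q^\alpha)\sum_{k=0}^\infty q^{\alpha k}\delta_{q^k/\phi}$, a real-valued measure of total mass 1 ($\delta_a$ the unit point mass at $a$). The square root of a negative number is the principal one ($\sqrt{-t}=i\sqrt t$ for $t>0$). *)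

theory Defs
  imports "HOL-Analysis.Analysis" "HOL-Number_Theory.Fib"
begin

definition phi :: real where "phi = (1 + sqrt 5) / 2"

definition qq :: real where "qq = (1 - sqrt 5) / (1 + sqrt 5)"

text \<open>Fibonomial coefficient, intended for 0 \<le> k \<le> n.\<close>
definition fibonomial :: "nat \<Rightarrow> nat \<Rightarrow> real" where
  "fibonomial n k = (\<Prod>i=1..k. real (fib (n - i + 1)) / real (fib i))"

definition qpoch :: "real \<Rightarrow> real \<Rightarrow> nat \<Rightarrow> real" where
  "qpoch a q k = (\<Prod>j<k. 1 - a * q ^ j)"

definition little_q_jacobi :: "nat \<Rightarrow> real \<Rightarrow> real \<Rightarrow> real \<Rightarrow> real \<Rightarrow> real" where
  "little_q_jacobi n x a b q =
     (\<Sum>k=0..n. qpoch (q powi (- int n)) q k * qpoch (a * b * q ^ (n + 1)) q k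
                / (qpoch q q k * qpoch (a * q) q k) * (x * q) ^ k)"

definition pa :: "nat \<Rightarrow> nat \<Rightarrow> real \<Rightarrow> real" where
  "pa \<alpha> n x = fibonomial (\<alpha> + n - 1) n * little_q_jacobi n (x * phi) (qq ^ (\<alpha> - 1)) 1 qq"

text \<open>Integral against the real-valued (signed) discrete measure
  mu_alpha = (1 - q^alpha) sum_k q^(alpha k) delta_(q^k/phi).\<close>
definition mu_integral :: "nat \<Rightarrow> (real \<Rightarrow> 'a::real_normed_field) \<Rightarrow> 'a" where
  "mu_integral \<alpha> f = of_real (1 - qq ^ \<alpha>) * (\<Sum>k. of_real (qq ^ (\<alpha> * k)) * f (qq ^ k / phi))"

text \<open>Orthonormal polynomials P_n^(alpha) (complex-valued: principal square root).\<close>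
definition PN :: "nat \<Rightarrow> nat \<Rightarrow> real \<Rightarrow> complex" where
  "PN \<alpha> n x = csqrt (complex_of_real ((-1) ^ (\<alpha> * n) * real (fib (\<alpha> + 2 * n)) / real (fib \<alpha>)))
               * complex_of_real (pa \<alpha> n x)"

end

theory Submission
  imports Defs
begin

text \<open>Binet's formula reads \<open>fib j = phi ^ j * (1 - qq ^ j) / sqrt 5\<close> with \<open>qq = -1 / phi\<^sup>2\<close>,
  so Fibonomials are powers of \<open>phi\<close> times Gaussian binomials in base \<open>qq\<close>, and \<open>pa\<close> is a
  rescaled little q-Jacobi polynomial.  Its orthogonality holds for every real \<open>0 < |q| < 1\<close>:
  expanding \<open>p_n(q^k) = sum_i c_i q^(i k)\<close> and summing geometric series turns the moment
  \<open>sum_k q^((alpha + j) k) p_n(q^k)\<close> into \<open>sum_i c_i q^i / (1 - q^(alpha + i + j))\<close>.  After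
  clearing \<open>(q^alpha; q)_n\<close> this is \<open>sum_i (q^-n; q)_i / (q; q)_i * q^i g(q^i)\<close>, where \<open>g\<close> is a
  polynomial of degree \<open>< n\<close> when \<open>j < n\<close> and a polynomial over one simple pole when \<open>j = n\<close>.
  The q-binomial theorem kills the former and, after partial fractions, evaluates the latter.
  The explicit coefficients follow by comparing ratios of consecutive coefficients.\<close>

section \<open>q-Pochhammer symbols\<close>

lemma qpoch_0 [simp]: "qpoch a q 0 = 1"
  unfolding qpoch_def by simp

lemma qpoch_Suc: "qpoch a q (Suc k) = qpoch a q k * (1 - a * q ^ k)"
  unfolding qpoch_def by simp

lemma qpoch_Suc_shift: "qpoch a q (Suc k) = (1 - a) * qpoch (a * q) q k"
  by (induction k) (simp_all add: qpoch_Suc mult.assoc mult.left_commute)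

lemma qpoch_add: "qpoch a q (m + k) = qpoch a q m * qpoch (a * q ^ m) q k"
  by (induction k) (simp_all add: qpoch_Suc power_add mult.assoc)

lemma qpoch_nonzero: "(\<And>j. j < k \<Longrightarrow> a * q ^ j \<noteq> 1) \<Longrightarrow> qpoch a q k \<noteq> 0"
  unfolding qpoch_def by auto

lemma qpoch_inverse_power:
  fixes q :: real
  assumes "q \<noteq> 0"
  shows "qpoch (inverse q ^ n) q n * q ^ (Suc n choose 2) = (-1) ^ n * qpoch q q n"
proof (induction n)
  case (Suc n)
  have shift: "inverse q ^ Suc n * q = inverse q ^ n"
    using assms by simp
  have choose: "Suc (Suc n) choose 2 = (Suc n choose 2) + Suc n"
    by (simp add: numeral_2_eq_2)
  have "qpoch (inverse q ^ Suc n) q (Suc n) * q ^ (Suc (Suc n) choose 2)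
      = ((1 - inverse q ^ Suc n) * q ^ Suc n) * (qpoch (inverse q ^ n) q n * q ^ (Suc n choose 2))"
    unfolding qpoch_Suc_shift shift choose power_add by (simp only: ac_simps)
  also have "(1 - inverse q ^ Suc n) * q ^ Suc n = - (1 - q * q ^ n)"
    using assms by (simp add: field_simps)
  finally show ?case
    unfolding Suc.IH by (simp add: qpoch_Suc [of q q n] algebra_simps)
qed (simp add: numeral_2_eq_2)

lemma qpoch_inverse_power_squared:
  fixes q :: real
  assumes "q \<noteq> 0"
  shows "(qpoch (inverse q ^ n) q n)\<^sup>2 * q ^ (n * Suc n) = (qpoch q q n)\<^sup>2"
proof -
  have "n * Suc n = (Suc n choose 2) * 2"
    by (induction n) (simp_all add: numeral_2_eq_2)
  then have "(qpoch (inverse q ^ n) q n)\<^sup>2 * q ^ (n * Suc n) = (qpoch (inverse q ^ n) q n * q ^ (Suc n choose 2))\<^sup>2"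
    by (simp add: power_mult power_mult_distrib)
  then show ?thesis
    unfolding qpoch_inverse_power [OF assms] by (simp add: power_mult_distrib flip: power_mult)
qed

section \<open>Orthogonality of little q-Jacobi polynomials\<close>

locale small_q =
  fixes q :: real
  assumes q_nonzero: "q \<noteq> 0" and abs_q_less_1: "\<bar>q\<bar> < 1"
begin

lemma abs_power_less_1: "j > 0 \<Longrightarrow> \<bar>q ^ j\<bar> < 1"
  using abs_q_less_1 by (simp add: power_abs power_less_one_iff)

lemma power_neq_1: "j > 0 \<Longrightarrow> q ^ j \<noteq> 1"
  using abs_power_less_1 [of j] by auto

lemma qpoch_power_nonzero: "m > 0 \<Longrightarrow> qpoch (q ^ m) q k \<noteq> 0"
  by (rule qpoch_nonzero) (simp add: power_neq_1 flip: power_add)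

lemma inverse_power_mult_power: "inverse q ^ n * q ^ n = 1"
  using q_nonzero by (simp add: power_mult_distrib [symmetric])

text \<open>By \<open>q_binomial\<close>, the functional \<open>g \<mapsto> \<Sum>i\<le>n. qdiff_coeff n i * g i\<close>
  annihilates \<open>g i = (q ^ s) ^ i\<close> for \<open>1 \<le> s \<le> n\<close>.\<close>
definition qdiff_coeff :: "nat \<Rightarrow> nat \<Rightarrow> real" where
  "qdiff_coeff n i = qpoch (inverse q ^ n) q i / qpoch q q i"

lemma qdiff_coeff_0 [simp]: "qdiff_coeff n 0 = 1"
  unfolding qdiff_coeff_def by simp

lemma qdiff_coeff_eq_0: "n < i \<Longrightarrow> qdiff_coeff n i = 0"
  unfolding qdiff_coeff_def qpoch_def
  using inverse_power_mult_power [of n] by (subst prod_zero) auto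

lemma qdiff_coeff_Suc_Suc:
  "qdiff_coeff (Suc n) (Suc i) = qdiff_coeff n (Suc i) - inverse q ^ Suc n * qdiff_coeff n i"
proof -
  define P where "P = qpoch (inverse q ^ n) q i"
  define K where "K = qpoch q q i"
  have shift: "inverse q ^ Suc n * q = inverse q ^ n"
    using q_nonzero by simp
  have num_Suc: "qpoch (inverse q ^ Suc n) q (Suc i) = (1 - inverse q ^ Suc n) * P"
    using qpoch_Suc_shift [of "inverse q ^ Suc n" q i] unfolding shift P_def .
  have num: "qpoch (inverse q ^ n) q (Suc i) = P * (1 - inverse q ^ n * q ^ i)"
    unfolding P_def by (rule qpoch_Suc)
  have den: "qpoch q q (Suc i) = K * (1 - q * q ^ i)"
    unfolding K_def by (rule qpoch_Suc)
  have "K \<noteq> 0" "1 - q * q ^ i \<noteq> 0"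
    unfolding K_def using qpoch_power_nonzero [of 1] power_neq_1 [of "Suc i"] by auto
  then show ?thesis
    unfolding qdiff_coeff_def num_Suc num den P_def [symmetric] K_def [symmetric]
    using q_nonzero by (simp add: field_simps)
qed

lemma sum_qdiff_coeff_Suc:
  "(\<Sum>i=0..Suc n. qdiff_coeff (Suc n) i * g i) =
     (\<Sum>i=0..n. qdiff_coeff n i * g i) - inverse q ^ Suc n * (\<Sum>i=0..n. qdiff_coeff n i * g (Suc i))"
proof -
  have "(\<Sum>i=0..Suc n. qdiff_coeff (Suc n) i * g i)
      = g 0 + (\<Sum>i=0..n. qdiff_coeff (Suc n) (Suc i) * g (Suc i))"
    by (subst sum.atLeast0_atMost_Suc_shift) simp
  also have "\<dots> = g 0 + (\<Sum>i=0..n. qdiff_coeff n (Suc i) * g (Suc i))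
          - inverse q ^ Suc n * (\<Sum>i=0..n. qdiff_coeff n i * g (Suc i))"
    by (simp add: qdiff_coeff_Suc_Suc algebra_simps sum_subtractf sum_distrib_left)
  also have "g 0 + (\<Sum>i=0..n. qdiff_coeff n (Suc i) * g (Suc i)) = (\<Sum>i=0..Suc n. qdiff_coeff n i * g i)"
    by (subst sum.atLeast0_atMost_Suc_shift) simp
  also have "\<dots> = (\<Sum>i=0..n. qdiff_coeff n i * g i)"
    using qdiff_coeff_eq_0 [of n "Suc n"] by simp
  finally show ?thesis .
qed

lemma q_binomial: "(\<Sum>i=0..n. qdiff_coeff n i * z ^ i) = (\<Prod>l=1..n. 1 - z * inverse q ^ l)"
proof (induction n)
  case (Suc n)
  have "(\<Sum>i=0..Suc n. qdiff_coeff (Suc n) i * z ^ i)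
      = (\<Sum>i=0..n. qdiff_coeff n i * z ^ i) - inverse q ^ Suc n * (\<Sum>i=0..n. qdiff_coeff n i * z ^ Suc i)"
    by (rule sum_qdiff_coeff_Suc)
  also have "(\<Sum>i=0..n. qdiff_coeff n i * z ^ Suc i) = z * (\<Sum>i=0..n. qdiff_coeff n i * z ^ i)"
    by (simp add: sum_distrib_left algebra_simps)
  finally show ?case
    using Suc.IH by (simp add: algebra_simps)
qed simp

lemma sum_qdiff_coeff_power_eq_0:
  assumes "1 \<le> s" "s \<le> n"
  shows "(\<Sum>i=0..n. qdiff_coeff n i * (q ^ s) ^ i) = 0"
  using assms inverse_power_mult_power [of s]
  unfolding q_binomial by (auto simp: mult.commute intro!: bexI [of _ s])

lemma sum_qdiff_coeff_poly_eq_0: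
  assumes "finite L" "1 \<le> s" "s + card L \<le> n"
  shows "(\<Sum>i=0..n. qdiff_coeff n i * (q ^ s) ^ i * (\<Prod>l\<in>L. 1 - f l * q ^ i)) = 0"
  using assms
proof (induction L arbitrary: s rule: finite_induct)
  case empty
  then show ?case using sum_qdiff_coeff_power_eq_0 by simp
next
  case (insert x L)
  have "(\<Sum>i=0..n. qdiff_coeff n i * (q ^ Suc s) ^ i * (\<Prod>l\<in>L. 1 - f l * q ^ i)) = 0"
    using insert by (intro insert.IH) auto
  moreover have "(\<Sum>i=0..n. qdiff_coeff n i * (q ^ s) ^ i * (\<Prod>l\<in>L. 1 - f l * q ^ i)) = 0"
    using insert by (intro insert.IH) auto
  moreover have "(\<Sum>i=0..n. qdiff_coeff n i * (q ^ s) ^ i * (\<Prod>l\<in>insert x L. 1 - f l * q ^ i))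
     = (\<Sum>i=0..n. qdiff_coeff n i * (q ^ s) ^ i * (\<Prod>l\<in>L. 1 - f l * q ^ i))
       - f x * (\<Sum>i=0..n. qdiff_coeff n i * (q ^ Suc s) ^ i * (\<Prod>l\<in>L. 1 - f l * q ^ i))"
    using insert.hyps
    by (simp add: sum_distrib_left sum_subtractf [symmetric] algebra_simps)
  ultimately show ?case
    by simp
qed

lemma sum_qdiff_coeff_pole:
  assumes "\<And>l. b * q ^ l \<noteq> 1"
  shows "(\<Sum>i=0..n. qdiff_coeff n i * q ^ i / (1 - b * q ^ i)) = b ^ n * qpoch q q n / qpoch b q (Suc n)"
  using assms
proof (induction n arbitrary: b)
  case 0
  then show ?case by (simp add: qpoch_Suc)
next
  case (Suc n)
  have bq: "(b * q) * q ^ l \<noteq> 1" for l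
    using Suc.prems [of "Suc l"] by (simp add: mult.assoc)
  have "(\<Sum>i=0..Suc n. qdiff_coeff (Suc n) i * (q ^ i / (1 - b * q ^ i)))
      = (\<Sum>i=0..n. qdiff_coeff n i * (q ^ i / (1 - b * q ^ i)))
        - inverse q ^ Suc n * (\<Sum>i=0..n. qdiff_coeff n i * (q ^ Suc i / (1 - b * q ^ Suc i)))"
    by (rule sum_qdiff_coeff_Suc)
  also have "(\<Sum>i=0..n. qdiff_coeff n i * (q ^ Suc i / (1 - b * q ^ Suc i)))
      = q * (\<Sum>i=0..n. qdiff_coeff n i * q ^ i / (1 - (b * q) * q ^ i))"
    by (simp add: sum_distrib_left algebra_simps)
  finally have "(\<Sum>i=0..Suc n. qdiff_coeff (Suc n) i * q ^ i / (1 - b * q ^ i))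
      = b ^ n * qpoch q q n / qpoch b q (Suc n)
        - (inverse q ^ Suc n * q * (b * q) ^ n) * qpoch q q n / qpoch (b * q) q (Suc n)"
    using Suc.IH [OF Suc.prems] Suc.IH [OF bq] by (simp add: mult.assoc)
  also have "inverse q ^ Suc n * q * (b * q) ^ n = b ^ n * (inverse q ^ Suc n * q ^ Suc n)"
    by (simp only: power_mult_distrib power_Suc mult_ac)
  also have "\<dots> = b ^ n"
    by (simp only: inverse_power_mult_power mult_1_right)
  finally have sum_eq: "(\<Sum>i=0..Suc n. qdiff_coeff (Suc n) i * q ^ i / (1 - b * q ^ i))
      = b ^ n * qpoch q q n / qpoch b q (Suc n) - b ^ n * qpoch q q n / qpoch (b * q) q (Suc n)" .
  have X_step: "qpoch b q (Suc (Suc n)) = qpoch b q (Suc n) * (1 - b * q ^ Suc n)"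
    by (rule qpoch_Suc)
  have Y_step: "qpoch b q (Suc (Suc n)) = (1 - b) * qpoch (b * q) q (Suc n)"
    by (rule qpoch_Suc_shift)
  have "qpoch b q (Suc (Suc n)) \<noteq> 0"
    using Suc.prems by (intro qpoch_nonzero) auto
  then have nonzero: "qpoch b q (Suc (Suc n)) \<noteq> 0" "1 - b * q ^ Suc n \<noteq> 0" "1 - b \<noteq> 0"
    using X_step Y_step by auto
  have X: "qpoch b q (Suc n) = qpoch b q (Suc (Suc n)) / (1 - b * q ^ Suc n)"
    using nonzero unfolding X_step by simp
  have Y: "qpoch (b * q) q (Suc n) = qpoch b q (Suc (Suc n)) / (1 - b)"
    using nonzero unfolding Y_step by simp
  show ?case
    unfolding sum_eq X Y using nonzero by (simp add: qpoch_Suc [of q q n] field_simps)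
qed

lemma sum_qdiff_coeff_poly_pole:
  assumes "finite L" "card L \<le> n" "b \<noteq> 0" "\<And>i. b * q ^ i \<noteq> 1"
  shows "(\<Sum>i=0..n. qdiff_coeff n i * q ^ i * (\<Prod>l\<in>L. 1 - f l * q ^ i) / (1 - b * q ^ i)) =
    (\<Prod>l\<in>L. 1 - f l / b) * (\<Sum>i=0..n. qdiff_coeff n i * q ^ i / (1 - b * q ^ i))"
  using assms(1,2)
proof (induction L rule: finite_induct)
  case (insert x L)
  have partial_fractions:
    "(1 - f x * q ^ i) / (1 - b * q ^ i) = f x / b + (1 - f x / b) / (1 - b * q ^ i)" for i
    using assms(3) assms(4) [of i] by (simp add: field_simps)
  have "(\<Sum>i=0..n. qdiff_coeff n i * q ^ i * (\<Prod>l\<in>insert x L. 1 - f l * q ^ i) / (1 - b * q ^ i))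
      = (\<Sum>i=0..n. qdiff_coeff n i * q ^ i * (\<Prod>l\<in>L. 1 - f l * q ^ i)
                     * ((1 - f x * q ^ i) / (1 - b * q ^ i)))"
    using insert.hyps by (intro sum.cong) (simp_all add: algebra_simps)
  also have "\<dots> = f x / b * (\<Sum>i=0..n. qdiff_coeff n i * (q ^ 1) ^ i * (\<Prod>l\<in>L. 1 - f l * q ^ i))
      + (1 - f x / b) * (\<Sum>i=0..n. qdiff_coeff n i * q ^ i * (\<Prod>l\<in>L. 1 - f l * q ^ i) / (1 - b * q ^ i))"
    unfolding partial_fractions by (simp add: sum_distrib_left sum.distrib algebra_simps)
  also have "(\<Sum>i=0..n. qdiff_coeff n i * (q ^ 1) ^ i * (\<Prod>l\<in>L. 1 - f l * q ^ i)) = 0"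
    using insert by (intro sum_qdiff_coeff_poly_eq_0) auto
  finally show ?case
    using insert by simp
qed simp

definition lqj_coeff :: "nat \<Rightarrow> nat \<Rightarrow> nat \<Rightarrow> real" where
  "lqj_coeff \<alpha> n i =
     qpoch (inverse q ^ n) q i * qpoch (q ^ (\<alpha> + n)) q i / (qpoch q q i * qpoch (q ^ \<alpha>) q i)"

lemma little_q_jacobi_eq_sum:
  assumes "\<alpha> \<ge> 1"
  shows "little_q_jacobi n y (q ^ (\<alpha> - 1)) 1 q = (\<Sum>i=0..n. lqj_coeff \<alpha> n i * (y * q) ^ i)"
proof -
  have "q powi (- int n) = inverse q ^ n"
    by (simp add: power_int_minus power_inverse)
  moreover have "q ^ (\<alpha> - 1) * 1 * q ^ (n + 1) = q ^ (\<alpha> + n)" "q ^ (\<alpha> - 1) * q = q ^ \<alpha>"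
    using assms by (simp_all add: power_add flip: power_Suc2)
  ultimately show ?thesis
    unfolding little_q_jacobi_def lqj_coeff_def by simp
qed

lemma little_q_jacobi_at_power:
  assumes "\<alpha> \<ge> 1"
  shows "little_q_jacobi n (q ^ k) (q ^ (\<alpha> - 1)) 1 q = (\<Sum>i=0..n. lqj_coeff \<alpha> n i * q ^ i * (q ^ i) ^ k)"
  unfolding little_q_jacobi_eq_sum [OF assms]
  by (simp add: power_mult_distrib mult.assoc flip: power_mult) (simp add: mult.commute)

lemma lqj_coeff_mult_qpoch:
  assumes "\<alpha> \<ge> 1"
  shows "lqj_coeff \<alpha> n i * qpoch (q ^ \<alpha>) q n = qdiff_coeff n i * qpoch (q ^ (\<alpha> + i)) q n"
proof -
  have "qpoch (q ^ \<alpha>) q n * qpoch (q ^ (\<alpha> + n)) q i = qpoch (q ^ \<alpha>) q i * qpoch (q ^ (\<alpha> + i)) q n"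
    using qpoch_add [of "q ^ \<alpha>" q n i] qpoch_add [of "q ^ \<alpha>" q i n]
    by (simp add: power_add add.commute)
  moreover have "qpoch (q ^ \<alpha>) q i \<noteq> 0" "qpoch q q i \<noteq> 0"
    using assms qpoch_power_nonzero [of \<alpha>] qpoch_power_nonzero [of 1] by auto
  ultimately show ?thesis
    unfolding lqj_coeff_def qdiff_coeff_def by (simp add: field_simps)
qed

text \<open>By the geometric series, \<open>lqj_moment \<alpha> n j\<close> is the moment
  \<open>\<Sum>k. q ^ ((\<alpha> + j) * k) * p\<^sub>n(q ^ k)\<close> of the little q-Jacobi polynomial.\<close>
definition lqj_moment :: "nat \<Rightarrow> nat \<Rightarrow> nat \<Rightarrow> real" where
  "lqj_moment \<alpha> n j = (\<Sum>i=0..n. lqj_coeff \<alpha> n i * q ^ i / (1 - q ^ (\<alpha> + i + j)))"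

lemma qpoch_mult_lqj_moment:
  assumes "\<alpha> \<ge> 1"
  shows "qpoch (q ^ \<alpha>) q n * lqj_moment \<alpha> n j =
    (\<Sum>i=0..n. qdiff_coeff n i * q ^ i * (\<Prod>l<n. 1 - q ^ (\<alpha> + l) * q ^ i) / (1 - q ^ (\<alpha> + j) * q ^ i))"
  unfolding lqj_moment_def sum_distrib_left
proof (intro sum.cong refl)
  fix i
  have "qpoch (q ^ (\<alpha> + i)) q n = (\<Prod>l<n. 1 - q ^ (\<alpha> + l) * q ^ i)"
    unfolding qpoch_def by (simp add: power_add algebra_simps)
  then have coeff: "lqj_coeff \<alpha> n i * qpoch (q ^ \<alpha>) q n = qdiff_coeff n i * (\<Prod>l<n. 1 - q ^ (\<alpha> + l) * q ^ i)"
    by (simp add: lqj_coeff_mult_qpoch [OF assms])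
  have "qpoch (q ^ \<alpha>) q n * (lqj_coeff \<alpha> n i * q ^ i / (1 - q ^ (\<alpha> + i + j)))
      = (lqj_coeff \<alpha> n i * qpoch (q ^ \<alpha>) q n) * q ^ i / (1 - q ^ (\<alpha> + j) * q ^ i)"
    by (simp add: power_add ac_simps)
  then show "qpoch (q ^ \<alpha>) q n * (lqj_coeff \<alpha> n i * q ^ i / (1 - q ^ (\<alpha> + i + j))) =
    qdiff_coeff n i * q ^ i * (\<Prod>l<n. 1 - q ^ (\<alpha> + l) * q ^ i) / (1 - q ^ (\<alpha> + j) * q ^ i)"
    unfolding coeff by (simp add: ac_simps)
qed

lemma lqj_moment_eq_0:
  assumes "\<alpha> \<ge> 1" "j < n"
  shows "lqj_moment \<alpha> n j = 0"
proof -
  let ?f = "\<lambda>i l. 1 - q ^ (\<alpha> + l) * q ^ i"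
  have "qpoch (q ^ \<alpha>) q n * lqj_moment \<alpha> n j
      = (\<Sum>i=0..n. qdiff_coeff n i * (q ^ 1) ^ i * (\<Prod>l\<in>{..<n} - {j}. ?f i l))"
    unfolding qpoch_mult_lqj_moment [OF assms(1)]
  proof (intro sum.cong refl)
    fix i
    have "(\<Prod>l<n. ?f i l) = ?f i j * (\<Prod>l\<in>{..<n} - {j}. ?f i l)"
      using assms(2) by (intro prod.remove) auto
    moreover have "?f i j \<noteq> 0"
      using power_neq_1 [of "\<alpha> + j + i"] assms(1) by (simp add: power_add)
    ultimately show "qdiff_coeff n i * q ^ i * (\<Prod>l<n. ?f i l) / ?f i j
        = qdiff_coeff n i * (q ^ 1) ^ i * (\<Prod>l\<in>{..<n} - {j}. ?f i l)"
      by simp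
  qed
  also have "\<dots> = 0"
    using assms(2) by (intro sum_qdiff_coeff_poly_eq_0) auto
  finally show ?thesis
    using qpoch_power_nonzero [of \<alpha>] assms(1) by simp
qed

lemma qpoch_mult_lqj_moment_diag:
  assumes "\<alpha> \<ge> 1"
  shows "qpoch (q ^ \<alpha>) q n * lqj_moment \<alpha> n n =
     qpoch (inverse q ^ n) q n * (q ^ (\<alpha> + n)) ^ n * qpoch q q n / qpoch (q ^ (\<alpha> + n)) q (Suc n)"
proof -
  have pole: "q ^ (\<alpha> + n) * q ^ l \<noteq> 1" for l
    using power_neq_1 [of "\<alpha> + n + l"] assms by (simp add: power_add)
  have "qpoch (q ^ \<alpha>) q n * lqj_moment \<alpha> n n
      = (\<Prod>l<n. 1 - q ^ (\<alpha> + l) / q ^ (\<alpha> + n)) * (\<Sum>i=0..n. qdiff_coeff n i * q ^ i / (1 - q ^ (\<alpha> + n) * q ^ i))"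
    unfolding qpoch_mult_lqj_moment [OF assms]
    using pole q_nonzero by (intro sum_qdiff_coeff_poly_pole) auto
  also have "(\<Prod>l<n. 1 - q ^ (\<alpha> + l) / q ^ (\<alpha> + n)) = qpoch (inverse q ^ n) q n"
    unfolding qpoch_def using q_nonzero
    by (intro prod.cong refl) (simp add: power_add field_simps)
  also have "(\<Sum>i=0..n. qdiff_coeff n i * q ^ i / (1 - q ^ (\<alpha> + n) * q ^ i))
      = (q ^ (\<alpha> + n)) ^ n * qpoch q q n / qpoch (q ^ (\<alpha> + n)) q (Suc n)"
    using pole by (rule sum_qdiff_coeff_pole)
  finally show ?thesis
    by simp
qed

lemma little_q_jacobi_products_sums:
  assumes "\<alpha> \<ge> 1"
  shows "(\<lambda>k. q ^ (\<alpha> * k) * (little_q_jacobi n (q ^ k) (q ^ (\<alpha> - 1)) 1 q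
                              * little_q_jacobi m (q ^ k) (q ^ (\<alpha> - 1)) 1 q))
     sums (\<Sum>j=0..m. lqj_coeff \<alpha> m j * q ^ j * lqj_moment \<alpha> n j)"
proof -
  define C where "C i j = lqj_coeff \<alpha> n i * q ^ i * (lqj_coeff \<alpha> m j * q ^ j)" for i j
  have term_eq: "q ^ (\<alpha> * k) * (little_q_jacobi n (q ^ k) (q ^ (\<alpha> - 1)) 1 q
                               * little_q_jacobi m (q ^ k) (q ^ (\<alpha> - 1)) 1 q)
      = (\<Sum>i=0..n. \<Sum>j=0..m. C i j * (q ^ (\<alpha> + i + j)) ^ k)" for k
  proof -
    have "q ^ (\<alpha> * k) * (little_q_jacobi n (q ^ k) (q ^ (\<alpha> - 1)) 1 q
                          * little_q_jacobi m (q ^ k) (q ^ (\<alpha> - 1)) 1 q)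
        = (q ^ \<alpha>) ^ k * ((\<Sum>i=0..n. lqj_coeff \<alpha> n i * q ^ i * (q ^ i) ^ k)
                          * (\<Sum>j=0..m. lqj_coeff \<alpha> m j * q ^ j * (q ^ j) ^ k))"
      unfolding little_q_jacobi_at_power [OF assms] by (simp add: power_mult)
    also have "\<dots> = (\<Sum>i=0..n. \<Sum>j=0..m. C i j * (q ^ (\<alpha> + i + j)) ^ k)"
      unfolding sum_product unfolding sum_distrib_left C_def
      by (intro sum.cong refl) (simp add: power_mult_distrib power_add ac_simps)
    finally show ?thesis .
  qed
  have "(\<lambda>k. \<Sum>i=0..n. \<Sum>j=0..m. C i j * (q ^ (\<alpha> + i + j)) ^ k)
      sums (\<Sum>i=0..n. \<Sum>j=0..m. C i j * (1 / (1 - q ^ (\<alpha> + i + j))))"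
  proof (intro sums_sum sums_mult)
    fix i j
    show "(\<lambda>k. (q ^ (\<alpha> + i + j)) ^ k) sums (1 / (1 - q ^ (\<alpha> + i + j)))"
      using geometric_sums [of "q ^ (\<alpha> + i + j)"] abs_power_less_1 [of "\<alpha> + i + j"] assms by simp
  qed
  also have "(\<Sum>i=0..n. \<Sum>j=0..m. C i j * (1 / (1 - q ^ (\<alpha> + i + j))))
      = (\<Sum>j=0..m. lqj_coeff \<alpha> m j * q ^ j * lqj_moment \<alpha> n j)"
    unfolding lqj_moment_def C_def sum_distrib_left
    by (subst sum.swap) (intro sum.cong refl, simp add: ac_simps)
  finally show ?thesis
    unfolding term_eq .
qed

lemma lqj_norm:
  assumes "\<alpha> \<ge> 1"
  shows "lqj_coeff \<alpha> n n * q ^ n * lqj_moment \<alpha> n n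
       = q ^ (\<alpha> * n) / (1 - q ^ (\<alpha> + 2 * n)) * (qpoch q q n / qpoch (q ^ \<alpha>) q n)\<^sup>2"
proof -
  define A where "A = qpoch (q ^ \<alpha>) q n"
  define B where "B = qpoch (q ^ (\<alpha> + n)) q n"
  define K where "K = qpoch q q n"
  define Q where "Q = qpoch (inverse q ^ n) q n"
  define D where "D = 1 - q ^ (\<alpha> + 2 * n)"
  have nonzero: "A \<noteq> 0" "B \<noteq> 0" "K \<noteq> 0" "D \<noteq> 0"
    unfolding A_def B_def K_def D_def
    using assms qpoch_power_nonzero [of _ n] qpoch_power_nonzero [of 1 n] power_neq_1 by auto
  have "q ^ (\<alpha> + n) * q ^ n = q ^ (\<alpha> + 2 * n)" "(q ^ (\<alpha> + n)) ^ n = q ^ ((\<alpha> + n) * n)"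
    by (simp_all add: mult_2 add.assoc power_mult flip: power_add)
  then have "A * lqj_moment \<alpha> n n = Q * q ^ ((\<alpha> + n) * n) * K / (B * D)"
    unfolding A_def qpoch_mult_lqj_moment_diag [OF assms] qpoch_Suc
    by (simp add: B_def K_def Q_def D_def)
  then have moment: "lqj_moment \<alpha> n n = Q * q ^ ((\<alpha> + n) * n) * K / (A * B * D)"
    using nonzero by (simp add: field_simps)
  have "lqj_coeff \<alpha> n n * q ^ n * lqj_moment \<alpha> n n = Q\<^sup>2 * (q ^ n * q ^ ((\<alpha> + n) * n)) / (A\<^sup>2 * D)"
    unfolding moment lqj_coeff_def A_def [symmetric] B_def [symmetric] K_def [symmetric] Q_def [symmetric]
    using nonzero by (simp add: field_simps power2_eq_square)
  also have "Q\<^sup>2 * (q ^ n * q ^ ((\<alpha> + n) * n)) = Q\<^sup>2 * q ^ (n * Suc n) * q ^ (\<alpha> * n)"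
    by (simp add: algebra_simps flip: power_add)
  also have "Q\<^sup>2 * q ^ (n * Suc n) = K\<^sup>2"
    unfolding Q_def K_def by (rule qpoch_inverse_power_squared [OF q_nonzero])
  finally show ?thesis
    using nonzero unfolding D_def [symmetric] A_def [symmetric] K_def [symmetric]
    by (simp add: field_simps power2_eq_square)
qed

lemma little_q_jacobi_orthogonality:
  assumes "\<alpha> \<ge> 1"
  shows "(\<lambda>k. q ^ (\<alpha> * k) * (little_q_jacobi n (q ^ k) (q ^ (\<alpha> - 1)) 1 q
                              * little_q_jacobi m (q ^ k) (q ^ (\<alpha> - 1)) 1 q))
     sums (if n = m then q ^ (\<alpha> * n) / (1 - q ^ (\<alpha> + 2 * n)) * (qpoch q q n / qpoch (q ^ \<alpha>) q n)\<^sup>2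
           else 0)"
proof -
  have "(\<Sum>j=0..m. lqj_coeff \<alpha> m j * q ^ j * lqj_moment \<alpha> n j) =
      (if n = m then q ^ (\<alpha> * n) / (1 - q ^ (\<alpha> + 2 * n)) * (qpoch q q n / qpoch (q ^ \<alpha>) q n)\<^sup>2 else 0)"
    if "m \<le> n" for n m
  proof -
    have "(\<Sum>j=0..m. lqj_coeff \<alpha> m j * q ^ j * lqj_moment \<alpha> n j)
        = (\<Sum>j\<in>{m} \<inter> {n}. lqj_coeff \<alpha> m j * q ^ j * lqj_moment \<alpha> n j)"
      using that lqj_moment_eq_0 [OF assms] by (intro sum.mono_neutral_right) auto
    then show ?thesis
      using lqj_norm [OF assms] by auto
  qed
  then show ?thesis
    using little_q_jacobi_products_sums [OF assms, of n m] little_q_jacobi_products_sums [OF assms, of m n]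
    by (cases "m \<le> n") (auto simp: mult.commute)
qed

lemma lqj_coeff_Suc:
  assumes "\<alpha> \<ge> 1"
  shows "lqj_coeff \<alpha> n (Suc k) = lqj_coeff \<alpha> n k *
    ((1 - inverse q ^ n * q ^ k) * (1 - q ^ (\<alpha> + n + k)) / ((1 - q ^ Suc k) * (1 - q ^ (\<alpha> + k))))"
proof -
  have "qpoch q q k \<noteq> 0" "qpoch (q ^ \<alpha>) q k \<noteq> 0" "1 - q ^ Suc k \<noteq> 0" "1 - q ^ (\<alpha> + k) \<noteq> 0"
    using assms qpoch_power_nonzero [of 1 k] qpoch_power_nonzero [of \<alpha> k]
      power_neq_1 [of "Suc k"] power_neq_1 [of "\<alpha> + k"] by auto
  moreover have "q ^ (\<alpha> + n) * q ^ k = q ^ (\<alpha> + n + k)" "q ^ \<alpha> * q ^ k = q ^ (\<alpha> + k)"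
    by (simp_all add: power_add)
  ultimately show ?thesis
    unfolding lqj_coeff_def qpoch_Suc by (simp add: field_simps)
qed

end

section \<open>The golden-ratio base\<close>

lemma sqrt5_gt_2: "sqrt 5 > (2::real)"
  by (rule real_less_rsqrt) simp

lemma phi_gt_1: "phi > 1"
  unfolding phi_def using sqrt5_gt_2 by simp

lemma qq_mult_phi_sq: "qq * phi\<^sup>2 = -1"
proof -
  have "1 + sqrt 5 \<noteq> 0"
    using sqrt5_gt_2 by simp
  then show ?thesis
    unfolding qq_def phi_def by (simp add: field_simps power2_eq_square)
qed

interpretation qq: small_q qq
proof
  have phi_sq: "phi\<^sup>2 > 1"
    using phi_gt_1 by simp
  have "qq = qq * phi\<^sup>2 / phi\<^sup>2"
    using phi_gt_1 by simp
  then have qq_eq: "qq = - 1 / phi\<^sup>2"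
    unfolding qq_mult_phi_sq .
  show "qq \<noteq> 0" "\<bar>qq\<bar> < 1"
    unfolding qq_eq using phi_sq phi_gt_1 by (simp_all add: divide_less_eq)
qed

lemma fib_eq_phi_power: "real (fib j) = phi ^ j * (1 - qq ^ j) / sqrt 5"
proof -
  have "(1 - sqrt 5) / 2 = qq * phi"
    using sqrt5_gt_2 unfolding phi_def qq_def by (simp add: field_simps)
  then have "real (fib j) = (phi ^ j - (qq * phi) ^ j) / sqrt 5"
    using fib_closed_form [of j] unfolding phi_def [symmetric] by simp
  then show ?thesis
    by (simp add: algebra_simps)
qed

lemma one_minus_qq_power: "1 - qq ^ j = sqrt 5 * real (fib j) / phi ^ j"
  unfolding fib_eq_phi_power using phi_gt_1 by simp

lemma one_minus_inverse_qq_power: "1 - inverse qq ^ j = - ((-1) ^ j * phi ^ j * sqrt 5 * real (fib j))"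
proof -
  define s where "s = (-1::real) ^ j"
  define P where "P = phi ^ j"
  have "inverse qq = - phi\<^sup>2"
    using qq_mult_phi_sq by (intro inverse_unique) simp
  then have "inverse qq ^ j = (-1) ^ j * (phi\<^sup>2) ^ j"
    using power_minus [of "phi\<^sup>2" j] by simp
  then have inverse_power: "inverse qq ^ j = s * P * P"
    unfolding s_def P_def by (simp add: power2_eq_square power_mult_distrib)
  have "(qq * phi\<^sup>2) ^ j = s"
    unfolding s_def qq_mult_phi_sq ..
  then have qq_power: "qq ^ j * (P * P) = s"
    unfolding P_def by (simp add: power_mult_distrib power2_eq_square)
  have "- (s * P * sqrt 5 * (P * (1 - qq ^ j) / sqrt 5)) = - (s * P * P) + s * (qq ^ j * (P * P))"
    by (simp add: field_simps)
  also have "\<dots> = 1 - s * P * P"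
    unfolding qq_power s_def by (simp flip: power_mult_distrib)
  finally show ?thesis
    unfolding fib_eq_phi_power inverse_power s_def [symmetric] P_def [symmetric] by simp
qed

lemma fib_pos: "j \<ge> 1 \<Longrightarrow> real (fib j) > 0"
  using fib_neq_0_nat [of j] by simp

lemma fibonomial_Suc:
  "k < m \<Longrightarrow> fibonomial m (Suc k) = fibonomial m k * (real (fib (m - k)) / real (fib (Suc k)))"
  unfolding fibonomial_def by (simp add: prod.nat_ivl_Suc' Suc_diff_Suc)

lemma fibonomial_Suc_top:
  "n \<le> m \<Longrightarrow> fibonomial (Suc m) n * real (fib (Suc m - n)) = fibonomial m n * real (fib (Suc m))"
proof (induction n)
  case (Suc n)
  have "fibonomial (Suc m) (Suc n) * real (fib (Suc m - Suc n))
      = (fibonomial (Suc m) n * real (fib (Suc m - n))) * real (fib (m - n)) / real (fib (Suc n))"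
    using Suc.prems by (subst fibonomial_Suc) auto
  also have "\<dots> = fibonomial m n * real (fib (Suc m)) * real (fib (m - n)) / real (fib (Suc n))"
    using Suc by simp
  also have "\<dots> = fibonomial m (Suc n) * real (fib (Suc m))"
    using Suc.prems by (subst fibonomial_Suc) auto
  finally show ?case .
qed (simp add: fibonomial_def)

lemma fibonomial_mult_qpoch:
  "k \<le> m \<Longrightarrow> fibonomial m k * qpoch qq qq k * phi ^ (k * k) = phi ^ (k * m) * qpoch (qq ^ (m + 1 - k)) qq k"
proof (induction k)
  case (Suc k)
  define d where "d = m - Suc k"
  have m: "m = k + Suc d" "m - k = Suc d" "m + 1 - k = Suc (Suc d)" "m + 1 - Suc k = Suc d"
    using Suc.prems unfolding d_def by auto
  have ratio: "real (fib (Suc d)) / real (fib (Suc k)) * (1 - qq ^ Suc k) * phi ^ (k + k + 1)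
      = phi ^ (Suc d + k) * (1 - qq ^ Suc d)"
    unfolding fib_eq_phi_power using qq.power_neq_1 [of "Suc k"] phi_gt_1
    by (simp add: field_simps power_add)
  have "fibonomial m (Suc k) * qpoch qq qq (Suc k) * phi ^ (Suc k * Suc k)
      = (fibonomial m k * qpoch qq qq k * phi ^ (k * k))
        * (real (fib (Suc d)) / real (fib (Suc k)) * (1 - qq ^ Suc k) * phi ^ (k + k + 1))"
  proof -
    have "Suc k * Suc k = k * k + (k + k + 1)"
      by simp
    then have "phi ^ (Suc k * Suc k) = phi ^ (k * k) * phi ^ (k + k + 1)"
      by (simp only: power_add)
    then show ?thesis
      unfolding fibonomial_Suc [of k m, OF Suc_le_lessD [OF Suc.prems]] qpoch_Suc m(2)
      by (simp only: ac_simps power_Suc)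
  qed
  also have "\<dots> = phi ^ (k * m) * qpoch (qq ^ Suc (Suc d)) qq k * (phi ^ (Suc d + k) * (1 - qq ^ Suc d))"
    using Suc.IH [OF Suc_leD [OF Suc.prems]] unfolding m(3) by (simp only: ratio)
  also have "\<dots> = phi ^ (Suc k * m) * qpoch (qq ^ (m + 1 - Suc k)) qq (Suc k)"
    unfolding m(4) qpoch_Suc_shift by (simp add: m(1) power_add ac_simps)
  finally show ?case .
qed (simp add: fibonomial_def)

lemma fibonomial_qpoch_ratio:
  assumes "\<alpha> \<ge> 1"
  shows "fibonomial (\<alpha> + n - 1) n * qpoch qq qq n / qpoch (qq ^ \<alpha>) qq n = phi ^ (n * (\<alpha> - 1))"
proof -
  have "fibonomial (\<alpha> + n - 1) n * qpoch qq qq n * phi ^ (n * n) = phi ^ (n * (\<alpha> + n - 1)) * qpoch (qq ^ \<alpha>) qq n"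
    using fibonomial_mult_qpoch [of n "\<alpha> + n - 1"] assms by simp
  moreover have "phi ^ (n * (\<alpha> + n - 1)) = phi ^ (n * (\<alpha> - 1)) * phi ^ (n * n)"
    using assms by (simp add: algebra_simps flip: power_add)
  moreover have "qpoch (qq ^ \<alpha>) qq n \<noteq> 0" "phi \<noteq> 0"
    using assms qq.qpoch_power_nonzero phi_gt_1 by auto
  ultimately show ?thesis
    by (simp add: field_simps)
qed

lemma qq_norm_eq_fib_ratio:
  assumes "\<alpha> \<ge> 1"
  shows "(1 - qq ^ \<alpha>) * (phi ^ (n * (\<alpha> - 1)))\<^sup>2 * (qq ^ (\<alpha> * n) / (1 - qq ^ (\<alpha> + 2 * n)))
       = (-1) ^ (\<alpha> * n) * real (fib \<alpha>) / real (fib (\<alpha> + 2 * n))"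
proof -
  obtain a where a: "\<alpha> = Suc a"
    using assms by (cases \<alpha>) auto
  define D where "D = 1 - qq ^ (\<alpha> + 2 * n)"
  have nonzero: "D \<noteq> 0" "phi \<noteq> 0"
    unfolding D_def using qq.power_neq_1 [of "\<alpha> + 2 * n"] assms phi_gt_1 by auto
  have "(phi ^ (n * a))\<^sup>2 * qq ^ (\<alpha> * n) = (qq * phi\<^sup>2) ^ (n * a) * qq ^ n"
    unfolding a by (simp add: algebra_simps flip: power_mult power_add)
  then have "(phi ^ (n * (\<alpha> - 1)))\<^sup>2 * qq ^ (\<alpha> * n) = (-1) ^ (n * a) * qq ^ n"
    unfolding qq_mult_phi_sq a by simp
  moreover have "qq ^ n * phi ^ (2 * n) = (-1) ^ n"
    using qq_mult_phi_sq by (metis power_mult power_mult_distrib)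
  then have "qq ^ n = (-1) ^ n / phi ^ (2 * n)"
    using nonzero by (simp add: eq_divide_eq)
  ultimately have "(1 - qq ^ \<alpha>) * (phi ^ (n * (\<alpha> - 1)))\<^sup>2 * (qq ^ (\<alpha> * n) / D)
      = (1 - qq ^ \<alpha>) * ((-1) ^ (n * a) * ((-1) ^ n / phi ^ (2 * n))) / D"
    by (simp add: mult.assoc)
  also have "\<dots> = (-1) ^ (\<alpha> * n) * (1 - qq ^ \<alpha>) / (phi ^ (2 * n) * D)"
    unfolding a by (simp add: power_add algebra_simps)
  also have "\<dots> = (-1) ^ (\<alpha> * n) * real (fib \<alpha>) / real (fib (\<alpha> + 2 * n))"
  proof -
    have "real (fib (\<alpha> + 2 * n)) = phi ^ \<alpha> * phi ^ (2 * n) * D / sqrt 5"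
      unfolding fib_eq_phi_power D_def by (simp add: power_add)
    then show ?thesis
      unfolding fib_eq_phi_power [of \<alpha>] using nonzero by (simp add: field_simps)
  qed
  finally show ?thesis
    unfolding D_def .
qed

lemma pa_at_qq_power: "pa \<alpha> n (qq ^ k / phi) = fibonomial (\<alpha> + n - 1) n * little_q_jacobi n (qq ^ k) (qq ^ (\<alpha> - 1)) 1 qq"
  unfolding pa_def using phi_gt_1 by simp

lemma pa_products_sums:
  assumes "\<alpha> \<ge> 1"
  shows "(\<lambda>k. qq ^ (\<alpha> * k) * (pa \<alpha> n (qq ^ k / phi) * pa \<alpha> m (qq ^ k / phi)))
     sums ((if n = m then (-1) ^ (\<alpha> * n) * real (fib \<alpha>) / real (fib (\<alpha> + 2 * n)) else 0) / (1 - qq ^ \<alpha>))"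
proof -
  define F where "F n = fibonomial (\<alpha> + n - 1) n" for n
  have "(\<lambda>k. F n * F m * (qq ^ (\<alpha> * k) * (little_q_jacobi n (qq ^ k) (qq ^ (\<alpha> - 1)) 1 qq
                                       * little_q_jacobi m (qq ^ k) (qq ^ (\<alpha> - 1)) 1 qq)))
      sums (F n * F m * (if n = m then qq ^ (\<alpha> * n) / (1 - qq ^ (\<alpha> + 2 * n))
                                       * (qpoch qq qq n / qpoch (qq ^ \<alpha>) qq n)\<^sup>2 else 0))"
    by (intro sums_mult qq.little_q_jacobi_orthogonality assms)
  moreover have "F n * F n * (qq ^ (\<alpha> * n) / (1 - qq ^ (\<alpha> + 2 * n)) * (qpoch qq qq n / qpoch (qq ^ \<alpha>) qq n)\<^sup>2)
      = (-1) ^ (\<alpha> * n) * real (fib \<alpha>) / real (fib (\<alpha> + 2 * n)) / (1 - qq ^ \<alpha>)"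
  proof -
    have "1 - qq ^ \<alpha> \<noteq> 0"
      using qq.power_neq_1 [of \<alpha>] assms by simp
    moreover have "F n * F n * (qpoch qq qq n / qpoch (qq ^ \<alpha>) qq n)\<^sup>2 = (phi ^ (n * (\<alpha> - 1)))\<^sup>2"
      unfolding F_def fibonomial_qpoch_ratio [OF assms, symmetric] by (simp add: power2_eq_square)
    ultimately show ?thesis
      unfolding qq_norm_eq_fib_ratio [OF assms, symmetric]
      by (simp add: ac_simps)
  qed
  ultimately show ?thesis
    unfolding pa_at_qq_power F_def [symmetric] by (simp add: ac_simps split: if_splits)
qed

lemma mu_integral_pa:
  assumes "\<alpha> \<ge> 1"
  shows "mu_integral \<alpha> (\<lambda>x. pa \<alpha> n x * pa \<alpha> m x)
       = (if n = m then (-1) ^ (\<alpha> * n) * real (fib \<alpha>) / real (fib (\<alpha> + 2 * n)) else 0)"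
proof -
  have "1 - qq ^ \<alpha> \<noteq> 0"
    using qq.power_neq_1 [of \<alpha>] assms by simp
  then show ?thesis
    using sums_unique [OF pa_products_sums [OF assms, of n m], symmetric]
    unfolding mu_integral_def by simp
qed

lemma lqj_coeff_ratio_qq:
  assumes "\<alpha> \<ge> 1" "k < n"
  shows "(1 - inverse qq ^ n * qq ^ k) * (1 - qq ^ (\<alpha> + n + k)) / ((1 - qq ^ Suc k) * (1 - qq ^ (\<alpha> + k))) * (phi * qq)
       = (-1) ^ (n - k) * (real (fib (n - k)) / real (fib (Suc k))) * (real (fib (\<alpha> + n + k)) / real (fib (\<alpha> + k)))"
proof -
  define D where "D = n - k"
  have "inverse qq ^ n * qq ^ k = inverse qq ^ D * (inverse qq ^ k * qq ^ k)"
    using assms(2) unfolding D_def by (simp flip: power_add)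
  then have inverse_power: "inverse qq ^ n * qq ^ k = inverse qq ^ D"
    unfolding qq.inverse_power_mult_power by simp
  have phi_qq: "phi * qq = - 1 / phi"
    using qq_mult_phi_sq phi_gt_1 by (simp add: field_simps power2_eq_square)
  have exponent: "phi ^ (\<alpha> + n + k) = phi ^ D * phi ^ k * phi ^ (\<alpha> + k)"
    using assms(2) unfolding D_def by (simp add: ac_simps flip: power_add)
  have "real (fib (Suc k)) > 0" "real (fib (\<alpha> + k)) > 0" "phi > 0"
    using assms(1) fib_pos phi_gt_1 by auto
  then show ?thesis
    unfolding inverse_power one_minus_inverse_qq_power one_minus_qq_power phi_qq exponent
      D_def [symmetric]
    by (simp add: field_simps)
qed

definition pa_coeff :: "nat \<Rightarrow> nat \<Rightarrow> nat \<Rightarrow> real" where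
  "pa_coeff \<alpha> n k = (-1) ^ (k * n - (k choose 2)) * fibonomial n k * fibonomial (\<alpha> + n + k - 1) n"

lemma pa_coeff_Suc:
  assumes "\<alpha> \<ge> 1" "k < n"
  shows "pa_coeff \<alpha> n (Suc k) = pa_coeff \<alpha> n k *
    ((-1) ^ (n - k) * (real (fib (n - k)) / real (fib (Suc k))) * (real (fib (\<alpha> + n + k)) / real (fib (\<alpha> + k))))"
proof -
  have "k choose 2 \<le> k * k"
    by (cases "k < 2") (simp_all add: binomial_eq_0 binomial_le_pow flip: power2_eq_square)
  also have "\<dots> \<le> k * n"
    using assms(2) by simp
  finally have "Suc k * n - (Suc k choose 2) = (k * n - (k choose 2)) + (n - k)"
    using assms(2) binomial_Suc_Suc [of k 1] by (simp add: numeral_2_eq_2)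
  then have sign: "(-1::real) ^ (Suc k * n - (Suc k choose 2)) = (-1) ^ (k * n - (k choose 2)) * (-1) ^ (n - k)"
    by (simp add: power_add)
  have "fibonomial (\<alpha> + n + k) n * real (fib (\<alpha> + k)) = fibonomial (\<alpha> + n + k - 1) n * real (fib (\<alpha> + n + k))"
    using fibonomial_Suc_top [of n "\<alpha> + n + k - 1"] assms(1) by (simp add: Suc_diff_le)
  then have "fibonomial (\<alpha> + n + Suc k - 1) n = fibonomial (\<alpha> + n + k - 1) n * (real (fib (\<alpha> + n + k)) / real (fib (\<alpha> + k)))"
    using fib_pos [of "\<alpha> + k"] assms(1) by (simp add: field_simps)
  then show ?thesis
    unfolding pa_coeff_def sign fibonomial_Suc [OF assms(2)] by (simp add: ac_simps)
qed

lemma pa_coeff_eq: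
  assumes "\<alpha> \<ge> 1" "k \<le> n"
  shows "fibonomial (\<alpha> + n - 1) n * qq.lqj_coeff \<alpha> n k * (phi * qq) ^ k = pa_coeff \<alpha> n k"
  using assms(2)
proof (induction k)
  case 0
  then show ?case by (simp add: qq.lqj_coeff_def pa_coeff_def fibonomial_def)
next
  case (Suc k)
  then have "k < n" by simp
  have "fibonomial (\<alpha> + n - 1) n * qq.lqj_coeff \<alpha> n (Suc k) * (phi * qq) ^ Suc k
      = (fibonomial (\<alpha> + n - 1) n * qq.lqj_coeff \<alpha> n k * (phi * qq) ^ k)
        * ((1 - inverse qq ^ n * qq ^ k) * (1 - qq ^ (\<alpha> + n + k))
           / ((1 - qq ^ Suc k) * (1 - qq ^ (\<alpha> + k))) * (phi * qq))"
    unfolding qq.lqj_coeff_Suc [OF assms(1)] by (simp add: ac_simps)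
  also have "\<dots> = pa_coeff \<alpha> n (Suc k)"
    using Suc \<open>k < n\<close> unfolding lqj_coeff_ratio_qq [OF assms(1) \<open>k < n\<close>] pa_coeff_Suc [OF assms(1) \<open>k < n\<close>]
    by simp
  finally show ?case .
qed

lemma pa_eq_sum:
  assumes "\<alpha> \<ge> 1"
  shows "pa \<alpha> n x = (\<Sum>k=0..n. pa_coeff \<alpha> n k * x ^ k)"
proof -
  have "pa \<alpha> n x = (\<Sum>k=0..n. fibonomial (\<alpha> + n - 1) n * qq.lqj_coeff \<alpha> n k * (phi * qq) ^ k * x ^ k)"
    unfolding pa_def qq.little_q_jacobi_eq_sum [OF assms] sum_distrib_left
    by (intro sum.cong refl) (simp add: power_mult_distrib ac_simps)
  then show ?thesis
    using pa_coeff_eq [OF assms] by simp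
qed

lemma PN_scale_squared:
  assumes "\<alpha> \<ge> 1"
  shows "(csqrt (complex_of_real ((-1) ^ (\<alpha> * n) * real (fib (\<alpha> + 2 * n)) / real (fib \<alpha>))))\<^sup>2
       * complex_of_real ((-1) ^ (\<alpha> * n) * real (fib \<alpha>) / real (fib (\<alpha> + 2 * n))) = 1"
proof -
  define X where "X = (-1) ^ (\<alpha> * n) * real (fib (\<alpha> + 2 * n)) / real (fib \<alpha>)"
  define Y where "Y = (-1) ^ (\<alpha> * n) * real (fib \<alpha>) / real (fib (\<alpha> + 2 * n))"
  have "real (fib \<alpha>) > 0" "real (fib (\<alpha> + 2 * n)) > 0"
    using assms fib_pos by auto
  moreover have "(-1::real) ^ (\<alpha> * n) * (-1) ^ (\<alpha> * n) = 1"
    by (simp flip: power_mult_distrib)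
  ultimately have "X * Y = 1"
    unfolding X_def Y_def by simp
  then show ?thesis
    unfolding X_def [symmetric] Y_def [symmetric] power2_csqrt of_real_mult [symmetric] by simp
qed

lemma mu_integral_PN:
  assumes "\<alpha> \<ge> 1"
  shows "mu_integral \<alpha> (\<lambda>x. PN \<alpha> n x * PN \<alpha> m x) = (if n = m then 1 else 0)"
proof -
  define c where "c n = csqrt (complex_of_real ((-1) ^ (\<alpha> * n) * real (fib (\<alpha> + 2 * n)) / real (fib \<alpha>)))" for n
  define V where "V = (if n = m then (-1) ^ (\<alpha> * n) * real (fib \<alpha>) / real (fib (\<alpha> + 2 * n)) else 0)"
  have "(\<lambda>k. c n * c m * of_real (qq ^ (\<alpha> * k) * (pa \<alpha> n (qq ^ k / phi) * pa \<alpha> m (qq ^ k / phi))))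
      sums (c n * c m * of_real (V / (1 - qq ^ \<alpha>)))"
    unfolding V_def by (intro sums_mult sums_of_real pa_products_sums assms)
  moreover have "(\<lambda>k. complex_of_real (qq ^ (\<alpha> * k)) * (PN \<alpha> n (qq ^ k / phi) * PN \<alpha> m (qq ^ k / phi)))
      = (\<lambda>k. c n * c m * of_real (qq ^ (\<alpha> * k) * (pa \<alpha> n (qq ^ k / phi) * pa \<alpha> m (qq ^ k / phi))))"
    unfolding PN_def c_def by (simp add: fun_eq_iff)
  ultimately have "mu_integral \<alpha> (\<lambda>x. PN \<alpha> n x * PN \<alpha> m x)
      = of_real (1 - qq ^ \<alpha>) * (c n * c m * of_real (V / (1 - qq ^ \<alpha>)))"
    unfolding mu_integral_def by (simp add: sums_unique [symmetric])
  also have "\<dots> = c n * c m * of_real ((1 - qq ^ \<alpha>) * (V / (1 - qq ^ \<alpha>)))"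
    by (simp only: of_real_mult ac_simps)
  also have "\<dots> = c n * c m * of_real V"
    using qq.power_neq_1 [of \<alpha>] assms by simp
  also have "\<dots> = (if n = m then 1 else 0)"
  proof (cases "n = m")
    case True
    then show ?thesis
      using PN_scale_squared [OF assms, of n] unfolding V_def c_def True power2_eq_square by simp
  qed (simp add: V_def)
  finally show ?thesis .
qed

theorem theorem3p1:
  fixes \<alpha> :: nat
  assumes "\<alpha> \<ge> 1"
  shows "(\<forall>n x. pa \<alpha> n x =
            (\<Sum>k=0..n. (-1) ^ (k * n - (k choose 2)) * fibonomial n k
                         * fibonomial (\<alpha> + n + k - 1) n * x ^ k))
       \<and> (\<forall>n m. mu_integral \<alpha> (\<lambda>x. pa \<alpha> n x * pa \<alpha> m x) =
            (if n = m then (-1) ^ (\<alpha> * n) * real (fib \<alpha>) / real (fib (\<alpha> + 2 * n)) else 0))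
       \<and> (\<forall>n m. mu_integral \<alpha> (\<lambda>x. PN \<alpha> n x * PN \<alpha> m x) = (if n = m then 1 else 0))"
  using pa_eq_sum [OF assms] mu_integral_pa [OF assms] mu_integral_PN [OF assms]
  unfolding pa_coeff_def by blast

end
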